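(* Let $\beta\in(0,1)$ and $1\le t\le n$. With $q_{n,s}:=\beta^{n-s}\frac{1-\beta}{1-\beta^n}$ and $\lambda_{n,t}:=\sum_{i=t}^n\sum_{j=1}^{t-1}q_{n,i}q_{n,j}(i-j)$, it holds that $$\lambda_{n,t}\le\frac{(n-t+1)\beta^{n-t+1}}{1-\beta^n}.$$
   Context: An empty sum equals $0$. *)

theory Defs
  imports Complex_Main
begin

definition q :: "real \<Rightarrow> nat \<Rightarrow> nat \<Rightarrow> real" where
  "q \<beta> n s = \<beta> ^ (n - s) * ((1 - \<beta>) / (1 - \<beta> ^ n))"

definition lam :: "real \<Rightarrow> nat \<Rightarrow> nat \<Rightarrow> real" where
  "lam \<beta> n t = (\<Sum>i=t..n. \<Sum>j=1..t-1. q \<beta> n i * q \<beta> n j * (real i - real j))"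

end

theory Submission
  imports Defs
begin

text \<open>Write \<open>m = n - t + 1\<close>. Multiplying by \<open>(1 - \<beta>)\<^sup>2\<close> turns the inner sum over \<open>j\<close> into
a telescoping sum, so that \<open>(1 - \<beta>\<^sup>n)\<^sup>2 \<lambda>\<^sub>n\<^sub>,\<^sub>t\<close> becomes
\<open>\<Sum>\<^sub>i \<beta>\<^bsup>n-i\<^esup> (\<beta>\<^sup>m A\<^sub>i - \<beta>\<^sup>n B\<^sub>i)\<close> with \<open>A\<^sub>i = (i + 1 - t)(1 - \<beta>) + \<beta>\<close> and
\<open>B\<^sub>i = i(1 - \<beta>) + \<beta>\<close>. The weighted sum of the \<open>A\<^sub>i\<close> telescopes to exactly \<open>m\<close>, while each
of the \<open>m\<close> terms \<open>\<beta>\<^bsup>n-i\<^esup> B\<^sub>i\<close> is at least \<open>\<beta>\<^sup>m\<close>. Hence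
\<open>(1 - \<beta>\<^sup>n)\<^sup>2 \<lambda>\<^sub>n\<^sub>,\<^sub>t \<le> m \<beta>\<^sup>m - m \<beta>\<^sup>m \<beta>\<^sup>n = (1 - \<beta>\<^sup>n) m \<beta>\<^sup>m\<close>.\<close>

lemma sum_power_mult_linear:
  fixes \<beta> x :: "'a :: comm_ring_1"
  assumes "k \<le> n"
  shows "(1 - \<beta>)\<^sup>2 * (\<Sum>j=1..k. \<beta> ^ (n - j) * (x - of_nat j))
           = \<beta> ^ (n - k) * ((x - of_nat k) * (1 - \<beta>) + \<beta>) - \<beta> ^ n * (x * (1 - \<beta>) + \<beta>)"
  using assms
proof (induction k)
  case 0
  then show ?case by (simp add: algebra_simps)
next
  case (Suc k)
  have power_shift: "\<beta> ^ (n - k) = \<beta> * \<beta> ^ (n - Suc k)"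
    using Suc.prems by (simp add: Suc_diff_Suc flip: power_Suc)
  have "(1 - \<beta>)\<^sup>2 * (\<Sum>j=1..Suc k. \<beta> ^ (n - j) * (x - of_nat j))
      = (1 - \<beta>)\<^sup>2 * (\<Sum>j=1..k. \<beta> ^ (n - j) * (x - of_nat j))
        + (1 - \<beta>)\<^sup>2 * (\<beta> ^ (n - Suc k) * (x - of_nat (Suc k)))"
    by (simp add: algebra_simps)
  also have "\<dots> = \<beta> ^ (n - k) * ((x - of_nat k) * (1 - \<beta>) + \<beta>) - \<beta> ^ n * (x * (1 - \<beta>) + \<beta>)
        + (1 - \<beta>)\<^sup>2 * (\<beta> ^ (n - Suc k) * (x - of_nat (Suc k)))"
    using Suc by simp
  also have "\<dots> = \<beta> ^ (n - Suc k) * ((x - of_nat (Suc k)) * (1 - \<beta>) + \<beta>)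
        - \<beta> ^ n * (x * (1 - \<beta>) + \<beta>)"
    unfolding power_shift by (simp add: algebra_simps power2_eq_square)
  finally show ?case .
qed

lemma sum_power_mult_affine:
  fixes \<beta> :: "'a :: comm_ring_1"
  assumes "t \<le> N"
  shows "(\<Sum>i=t..N. \<beta> ^ (N - i) * ((of_nat i + 1 - of_nat t) * (1 - \<beta>) + \<beta>))
           = of_nat N + 1 - of_nat t"
  using assms
proof (induction N rule: dec_induct)
  case base
  then show ?case by simp
next
  case (step N)
  let ?a = "\<lambda>i. (of_nat i + 1 - of_nat t) * (1 - \<beta>) + \<beta>"
  have "(\<Sum>i=t..Suc N. \<beta> ^ (Suc N - i) * ?a i)
      = (\<Sum>i=t..N. \<beta> ^ (Suc N - i) * ?a i) + ?a (Suc N)"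
    using step.hyps by simp
  also have "(\<Sum>i=t..N. \<beta> ^ (Suc N - i) * ?a i) = \<beta> * (\<Sum>i=t..N. \<beta> ^ (N - i) * ?a i)"
    unfolding sum_distrib_left by (rule sum.cong) (auto simp: Suc_diff_le)
  also have "\<dots> = \<beta> * (of_nat N + 1 - of_nat t)"
    using step.IH by simp
  also have "\<beta> * (of_nat N + 1 - of_nat t) + ?a (Suc N) = of_nat (Suc N) + 1 - of_nat t"
    by (simp add: algebra_simps)
  finally show ?case .
qed

lemma lam_scaled_eq:
  fixes \<beta> :: real
  assumes "1 \<le> t" "t \<le> n" "\<beta> ^ n \<noteq> 1"
  shows "(1 - \<beta> ^ n)\<^sup>2 * lam \<beta> n t
           = (\<Sum>i=t..n. \<beta> ^ (n - i) * (\<beta> ^ (n - t + 1) * ((real i + 1 - real t) * (1 - \<beta>) + \<beta>)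
                                      - \<beta> ^ n * (real i * (1 - \<beta>) + \<beta>)))"
proof -
  have inner: "(1 - \<beta>)\<^sup>2 * (\<Sum>j=1..t-1. \<beta> ^ (n - j) * (real i - real j))
      = \<beta> ^ (n - t + 1) * ((real i + 1 - real t) * (1 - \<beta>) + \<beta>) - \<beta> ^ n * (real i * (1 - \<beta>) + \<beta>)"
    for i
    using sum_power_mult_linear[of "t - 1" n \<beta> "real i"] assms
    by (simp add: Suc_diff_le algebra_simps)
  define c where "c = (1 - \<beta>) / (1 - \<beta> ^ n)"
  have "lam \<beta> n t = c\<^sup>2 * (\<Sum>i=t..n. \<beta> ^ (n - i) * (\<Sum>j=1..t-1. \<beta> ^ (n - j) * (real i - real j)))"
    unfolding lam_def q_def c_def[symmetric]
    by (simp add: sum_distrib_left power2_eq_square algebra_simps)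
  moreover have "(1 - \<beta> ^ n)\<^sup>2 * c\<^sup>2 = (1 - \<beta>)\<^sup>2"
    using assms(3) unfolding c_def by (simp add: power_divide)
  ultimately have "(1 - \<beta> ^ n)\<^sup>2 * lam \<beta> n t
      = (\<Sum>i=t..n. \<beta> ^ (n - i) * ((1 - \<beta>)\<^sup>2 * (\<Sum>j=1..t-1. \<beta> ^ (n - j) * (real i - real j))))"
    by (simp add: sum_distrib_left algebra_simps)
  then show ?thesis
    unfolding inner .
qed

lemma power_le_power_mult_affine:
  fixes \<beta> :: real
  assumes "0 < \<beta>" "\<beta> < 1" "1 \<le> t" "t \<le> i" "i \<le> n"
  shows "\<beta> ^ (n - t + 1) \<le> \<beta> ^ (n - i) * (real i * (1 - \<beta>) + \<beta>)"
proof -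
  have "\<beta> ^ (n - t + 1) \<le> \<beta> ^ (n - i)"
    using assms by (intro power_decreasing) auto
  moreover have "1 \<le> real i * (1 - \<beta>) + \<beta>"
  proof -
    have "1 * (1 - \<beta>) \<le> real i * (1 - \<beta>)"
      using assms by (intro mult_right_mono) auto
    then show ?thesis by simp
  qed
  ultimately show ?thesis
    using mult_mono[of "\<beta> ^ (n - t + 1)" "\<beta> ^ (n - i)" 1] assms by simp
qed

lemma lam_scaled_le:
  fixes \<beta> :: real
  assumes "0 < \<beta>" "\<beta> < 1" "1 \<le> t" "t \<le> n"
  defines "m \<equiv> n - t + 1"
  shows "(1 - \<beta> ^ n)\<^sup>2 * lam \<beta> n t
           \<le> \<beta> ^ m * (\<Sum>i=t..n. \<beta> ^ (n - i) * ((real i + 1 - real t) * (1 - \<beta>) + \<beta>))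
             - real m * \<beta> ^ n * \<beta> ^ m"
proof -
  have "\<beta> ^ n < 1"
    using assms by (simp add: power_less_one_iff)
  then have "(1 - \<beta> ^ n)\<^sup>2 * lam \<beta> n t
      = (\<Sum>i=t..n. \<beta> ^ (n - i) * (\<beta> ^ m * ((real i + 1 - real t) * (1 - \<beta>) + \<beta>)
                                 - \<beta> ^ n * (real i * (1 - \<beta>) + \<beta>)))"
    using lam_scaled_eq[of t n \<beta>] assms by simp
  also have "\<dots> \<le> (\<Sum>i=t..n. \<beta> ^ m * (\<beta> ^ (n - i) * ((real i + 1 - real t) * (1 - \<beta>) + \<beta>))
                            - \<beta> ^ n * \<beta> ^ m)"
  proof (rule sum_mono)
    fix i assume "i \<in> {t..n}"
    then have "\<beta> ^ n * \<beta> ^ m \<le> \<beta> ^ n * (\<beta> ^ (n - i) * (real i * (1 - \<beta>) + \<beta>))"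
      using power_le_power_mult_affine[OF assms(1-3)] assms(1) unfolding m_def
      by (intro mult_left_mono) auto
    then show "\<beta> ^ (n - i) * (\<beta> ^ m * ((real i + 1 - real t) * (1 - \<beta>) + \<beta>)
                                 - \<beta> ^ n * (real i * (1 - \<beta>) + \<beta>))
             \<le> \<beta> ^ m * (\<beta> ^ (n - i) * ((real i + 1 - real t) * (1 - \<beta>) + \<beta>)) - \<beta> ^ n * \<beta> ^ m"
      by (simp add: algebra_simps)
  qed
  also have "\<dots> = \<beta> ^ m * (\<Sum>i=t..n. \<beta> ^ (n - i) * ((real i + 1 - real t) * (1 - \<beta>) + \<beta>))
                   - real m * \<beta> ^ n * \<beta> ^ m"
    using assms(4) by (simp add: sum_subtractf sum_distrib_left m_def Suc_diff_le)
  finally show ?thesis .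
qed

theorem proposition5:
  fixes \<beta> :: real and n t :: nat
  assumes "0 < \<beta>" "\<beta> < 1" "1 \<le> t" "t \<le> n"
  shows "lam \<beta> n t \<le> real (n - t + 1) * \<beta> ^ (n - t + 1) / (1 - \<beta> ^ n)"
proof -
  define m where "m = n - t + 1"
  have denom_pos: "0 < 1 - \<beta> ^ n"
    using assms by (simp add: power_less_one_iff)
  have "(1 - \<beta> ^ n)\<^sup>2 * lam \<beta> n t
      \<le> \<beta> ^ m * (\<Sum>i=t..n. \<beta> ^ (n - i) * ((real i + 1 - real t) * (1 - \<beta>) + \<beta>))
        - real m * \<beta> ^ n * \<beta> ^ m"
    using lam_scaled_le[OF assms] unfolding m_def .
  also have "\<dots> = (1 - \<beta> ^ n) * (real m * \<beta> ^ m)"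
    using sum_power_mult_affine[OF assms(4), of \<beta>] assms(4)
    by (simp add: m_def) (simp add: algebra_simps)
  finally have "(1 - \<beta> ^ n) * lam \<beta> n t \<le> real m * \<beta> ^ m"
    using denom_pos by (simp add: power2_eq_square mult.assoc)
  then show ?thesis
    using denom_pos unfolding m_def by (simp add: pos_le_divide_eq mult.commute)
qed

end
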